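(* Let $\tau\mapsto\xi(\tau)$ describe the radial coordinate of a future-directed timelike observer with $\lim_{\tau\to\infty}\frac{d\xi}{d\tau}(\tau)=v_{obs,\infty}\in(0,1)$ (so $\xi(\tau)\to\infty$), and set $a(\varepsilon)=(\varepsilon^2-1)/(\varepsilon v_{obs,\infty})$. Let $\varepsilon>1$ and $0<v<\sqrt{\varepsilon^2-1}$, and for large $\xi$ put $\lambda(v,\xi)=\xi\sqrt{\frac{\varepsilon^2-v^2}{1-2/\xi}-1}$. Then $$\lim_{\tau\to\infty}\big[G_{\varepsilon,\lambda(v,\xi(\tau))}(\xi(\tau),\pi_{\xi-}(\xi(\tau)))-\tau\big]=-\infty,$$ $$\lim_{\tau\to\infty}\big[G_{\varepsilon,\lambda(v,\xi(\tau))}(\xi(\tau),\pi_{\xi+}(\xi(\tau)))-\tau\big]=\begin{cases}-\infty,&v<a(\varepsilon),\\+\infty,&v>a(\varepsilon).\end{cases}$$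
   Context: $U_\lambda(\xi)=(1-\tfrac2\xi)(1+\lambda^2/\xi^2)$. For $\varepsilon>1$, $\lambda_c(\varepsilon)$ is the value of $\lambda$ for which the local maximum of $U_\lambda$ equals $\varepsilon^2$. Note $\lambda(v,\xi)$ is chosen so that $\sqrt{\varepsilon^2-U_{\lambda(v,\xi)}(\xi)}=v$, and $\lambda(v,\xi)>\lambda_c(\varepsilon)$ for $\xi$ large. For $\lambda>\lambda_c(\varepsilon)$ let $\xi_0$ be the turning point, i.e. the root of $U_\lambda(\xi_0)=\varepsilon^2$ beyond the maximum of $U_\lambda$; for $\xi\ge\xi_0$ let $s(x)=\sqrt{\varepsilon^2-U_\lambda(x)}$, $\pi_{\xi\pm}(\xi)=(\tfrac2\xi\varepsilon\pm s(\xi))/(1-\tfrac2\xi)$, and $G_{\varepsilon,\lambda}(\xi,\pi_{\xi\pm}(\xi))=\int_{\xi_0}^{\xi}\frac{\frac2x s(x)\pm\varepsilon}{(1-\frac2x)s(x)}dx$ (the line integral of $\frac{\frac2\xi\pi_\xi+(1+\frac2\xi)\varepsilon}{(1-\frac2\xi)\pi_\xi-\frac2\xi\varepsilon}d\xi$ along the curve $(1-\tfrac2\xi)\pi_\xi^2-\tfrac4\xi\varepsilon\pi_\xi-(1+\tfrac2\xi)\varepsilon^2+1+\lambda^2/\xi^2=0$ from the turning point). *)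

theory Defs
  imports "HOL-Analysis.Analysis"
begin

definition U :: "real \<Rightarrow> real \<Rightarrow> real" where
  "U lam xi = (1 - 2 / xi) * (1 + lam\<^sup>2 / xi\<^sup>2)"

text \<open>Turning point xi_0: the root of U_lambda = eps^2 beyond the maximum of U_lambda,
  i.e. the largest root in (2, infinity) (U_lambda decreases after its maximum to a minimum
  below 1 and then increases to 1 < eps^2, so there is exactly one root beyond the maximum,
  and it is the largest one).\<close>
definition turning_point :: "real \<Rightarrow> real \<Rightarrow> real" where
  "turning_point eps lam = (GREATEST x. x > 2 \<and> U lam x = eps\<^sup>2)"

definition s_fun :: "real \<Rightarrow> real \<Rightarrow> real \<Rightarrow> real" where
  "s_fun eps lam x = sqrt (eps\<^sup>2 - U lam x)"

text \<open>pi_{xi,+-}(xi); sg = 1 gives the + branch, sg = -1 the - branch.\<close>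
definition pi_xi :: "real \<Rightarrow> real \<Rightarrow> real \<Rightarrow> real \<Rightarrow> real" where
  "pi_xi sg eps lam xi = (2 / xi * eps + sg * s_fun eps lam xi) / (1 - 2 / xi)"

text \<open>G_{eps,lambda}(xi, pi_{xi,+-}(xi)) as the (improper, absolutely convergent) integral
  from the turning point to xi; sg = 1 for pi_{xi+}, sg = -1 for pi_{xi-}.\<close>
definition G_branch :: "real \<Rightarrow> real \<Rightarrow> real \<Rightarrow> real \<Rightarrow> real" where
  "G_branch sg eps lam xi =
     integral {turning_point eps lam .. xi}
       (\<lambda>x. (2 / x * s_fun eps lam x + sg * eps) / ((1 - 2 / x) * s_fun eps lam x))"

definition lam_v :: "real \<Rightarrow> real \<Rightarrow> real \<Rightarrow> real" where
  "lam_v eps v xi = xi * sqrt ((eps\<^sup>2 - v\<^sup>2) / (1 - 2 / xi) - 1)"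

definition a_crit :: "real \<Rightarrow> real \<Rightarrow> real" where
  "a_crit eps vinf = (eps\<^sup>2 - 1) / (eps * vinf)"

end

(*
  Write a = eps^2 - 1.  For lam = lam(v, X) the turning point t grows like X, and on [t, X]
  the quantity eps^2 - U_lam is squeezed between c0 a (x^2 - t^2) / x^2 and C - lam^2 / x^2,
  with explicit constants c0 -> 1 and B, C -> a as lam -> infinity (B bounds lam^2 / t^2).
  These bounds give integrands with elementary primitives, so that
  G_+(X) = eps v X / a + o(X) (because X^2 - lam^2 / a ~ v^2 X^2 / a) and G_-(X) <= o(X).
  By l'Hopital, xi(tau) ~ vinf tau; hence G_+(xi(tau)) - tau ~ (eps v vinf / a - 1) tau,
  whose sign is that of v - a(eps), while G_-(xi(tau)) - tau <= (o(1) - 1) tau.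
*)

theory Submission
  imports Defs "HOL-Computational_Algebra.Polynomial" "HOL-Real_Asymp.Real_Asymp"
begin

lemma eps_sq_minus_U_eq:
  fixes eps lam x :: real
  assumes "x \<noteq> 0"
  shows "eps\<^sup>2 - U lam x = ((eps\<^sup>2 - 1) * x ^ 3 + 2 * x\<^sup>2 - lam\<^sup>2 * x + 2 * lam\<^sup>2) / x ^ 3"
  using assms unfolding U_def by (simp add: field_simps power2_eq_square power3_eq_cube)

lemma U_eq_iff_cubic:
  fixes eps lam x :: real
  assumes "x \<noteq> 0"
  shows "U lam x = eps\<^sup>2 \<longleftrightarrow> (eps\<^sup>2 - 1) * x ^ 3 + 2 * x\<^sup>2 - lam\<^sup>2 * x + 2 * lam\<^sup>2 = 0"
  using eps_sq_minus_U_eq[of x eps lam] assms by auto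

lemma turning_point_greatest:
  fixes eps lam r :: real
  assumes eps: "1 < eps" and r: "2 < r" "U lam r = eps\<^sup>2"
  shows "r \<le> turning_point eps lam" "2 < turning_point eps lam"
    "U lam (turning_point eps lam) = eps\<^sup>2"
proof -
  define S where "S = {x. 2 < x \<and> U lam x = eps\<^sup>2}"
  have "1 < eps\<^sup>2" using eps by (simp add: one_less_power)
  then have "[:2 * lam\<^sup>2, - lam\<^sup>2, 2, eps\<^sup>2 - 1:] \<noteq> 0" by simp
  moreover have "S \<subseteq> {x. poly [:2 * lam\<^sup>2, - lam\<^sup>2, 2, eps\<^sup>2 - 1:] x = 0}"
  proof
    fix x assume "x \<in> S"
    then have "(eps\<^sup>2 - 1) * x ^ 3 + 2 * x\<^sup>2 - lam\<^sup>2 * x + 2 * lam\<^sup>2 = 0"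
      using U_eq_iff_cubic[of x lam eps] by (auto simp: S_def)
    then show "x \<in> {x. poly [:2 * lam\<^sup>2, - lam\<^sup>2, 2, eps\<^sup>2 - 1:] x = 0}"
      by (simp add: algebra_simps power2_eq_square power3_eq_cube)
  qed
  ultimately have fin: "finite S" using poly_roots_finite finite_subset by blast
  have rS: "r \<in> S" using r by (simp add: S_def)
  have "turning_point eps lam = Max S"
    unfolding turning_point_def S_def[symmetric]
  proof (rule Greatest_equality)
    show "Max S > 2 \<and> U lam (Max S) = eps\<^sup>2" using Max_in[OF fin] rS by (auto simp: S_def)
    show "y \<le> Max S" if "y > 2 \<and> U lam y = eps\<^sup>2" for y
      using that fin by (intro Max_ge) (auto simp: S_def)
  qed
  then show "r \<le> turning_point eps lam" "2 < turning_point eps lam"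
    "U lam (turning_point eps lam) = eps\<^sup>2"
    using Max_in[OF fin] Max_ge[OF fin rS] rS by (auto simp: S_def)
qed

lemma turning_point_root:
  fixes eps lam :: real
  assumes eps: "1 < eps" and lam: "27 * (eps\<^sup>2 - 1) + 18 < lam\<^sup>2"
  shows "3 < turning_point eps lam" "U lam (turning_point eps lam) = eps\<^sup>2"
proof -
  define P where "P x = (eps\<^sup>2 - 1) * x ^ 3 + 2 * x\<^sup>2 - lam\<^sup>2 * x + 2 * lam\<^sup>2" for x :: real
  have "1 < eps\<^sup>2" using eps by (simp add: one_less_power)
  then have "\<forall>\<^sub>F x in at_top. 0 < P x" unfolding P_def by real_asymp
  then obtain X where X: "3 \<le> X" "0 < P X"
    using eventually_ge_at_top[of 3]
    by (metis (mono_tags) eventually_conj eventually_happens' trivial_limit_at_top_linorder)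
  have "P 3 < 0" using lam by (simp add: P_def)
  then obtain r where r: "3 \<le> r" "r \<le> X" "P r = 0"
    using IVT'[of P 3 0 X] X by (force simp: P_def intro!: continuous_intros)
  with \<open>P 3 < 0\<close> have "3 < r" by (cases "r = 3") auto
  moreover have "U lam r = eps\<^sup>2" using r \<open>3 < r\<close> by (simp add: U_eq_iff_cubic P_def)
  ultimately show "3 < turning_point eps lam" "U lam (turning_point eps lam) = eps\<^sup>2"
    using turning_point_greatest[OF eps, of r lam] by auto
qed

definition G_integrand :: "real \<Rightarrow> real \<Rightarrow> real \<Rightarrow> real \<Rightarrow> real" where
  "G_integrand sg eps lam x = (2 / x * s_fun eps lam x + sg * eps) / ((1 - 2 / x) * s_fun eps lam x)"

lemma G_branch_eq_integral:
  "G_branch sg eps lam X = integral {turning_point eps lam..X} (G_integrand sg eps lam)"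
  unfolding G_branch_def G_integrand_def ..

lemma G_integrand_measurable: "G_integrand sg eps lam \<in> borel_measurable (lebesgue_on S)"
proof -
  have "G_integrand sg eps lam \<in> borel_measurable borel"
    unfolding G_integrand_def s_fun_def U_def by measurable
  then show ?thesis by (simp add: measurable_completion measurable_restrict_space1)
qed

lemma has_integral_x_div_sqrt:
  fixes c d t X :: real
  assumes "0 < c" "d \<le> c * t\<^sup>2" "0 \<le> t" "t \<le> X"
  shows "((\<lambda>x. x / sqrt (c * x\<^sup>2 - d)) has_integral
           (sqrt (c * X\<^sup>2 - d) - sqrt (c * t\<^sup>2 - d)) / c) {t..X}"
proof -
  have "((\<lambda>x. x / sqrt (c * x\<^sup>2 - d)) has_integral
          sqrt (c * X\<^sup>2 - d) / c - sqrt (c * t\<^sup>2 - d) / c) {t..X}"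
  proof (rule fundamental_theorem_of_calculus_interior)
    show "continuous_on {t..X} (\<lambda>x. sqrt (c * x\<^sup>2 - d) / c)"
      using assms by (intro continuous_intros) auto
    show "((\<lambda>x. sqrt (c * x\<^sup>2 - d) / c) has_vector_derivative x / sqrt (c * x\<^sup>2 - d)) (at x)"
      if "x \<in> {t<..<X}" for x
    proof -
      have "t\<^sup>2 < x\<^sup>2" using that assms by (intro power_strict_mono) auto
      then have "c * t\<^sup>2 < c * x\<^sup>2" using assms by simp
      then have pos: "0 < c * x\<^sup>2 - d" using assms by linarith
      have "((\<lambda>x. sqrt (c * x\<^sup>2 - d) / c) has_real_derivative x / sqrt (c * x\<^sup>2 - d)) (at x)"
        using pos assms by (auto intro!: derivative_eq_intros simp: field_simps)
      then show ?thesis by (simp add: has_real_derivative_iff_has_vector_derivative)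
    qed
  qed (use assms in auto)
  then show ?thesis by (simp add: diff_divide_distrib)
qed

text \<open>The constants are chosen so that the turning point \<open>t\<close> satisfies \<open>l \<le> t\<close> and
  \<open>lam\<^sup>2 \<le> B * t\<^sup>2\<close>, and for \<open>x \<ge> t\<close> one has
  \<open>c0 * a * (x\<^sup>2 - t\<^sup>2) / x\<^sup>2 \<le> eps\<^sup>2 - U lam x \<le> C - lam\<^sup>2 / x\<^sup>2\<close>.
  As \<open>lam \<rightarrow> \<infinity>\<close>, \<open>B, C \<rightarrow> a\<close> and \<open>c0 \<rightarrow> 1\<close>, so both bounds are sharp to leading order.\<close>
locale turning_point_estimates =
  fixes eps lam a l B C c0 :: real
  assumes eps_gt_1: "1 < eps"
    and a_def: "a = eps\<^sup>2 - 1"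
    and l_def: "l = lam / sqrt (3 * a + 2)"
    and B_def: "B = (a * l + 2) / (l - 2)"
    and C_def: "C = a + 2 / l * (1 + B)"
    and c0_def: "c0 = 1 - B / (a * l)"
    and l_gt_3: "3 < l"
    and c0_pos: "0 < c0"
begin

abbreviation t :: real where "t \<equiv> turning_point eps lam"

abbreviation s :: "real \<Rightarrow> real" where "s \<equiv> s_fun eps lam"

lemma a_pos: "0 < a"
  using eps_gt_1 unfolding a_def by (simp add: one_less_power)

lemma lam_eq: "lam = l * sqrt (3 * a + 2)"
  using a_pos unfolding l_def by simp

lemma lam_pos: "0 < lam"
  using a_pos l_gt_3 by (simp add: lam_eq)

lemma t_gt_3: "3 < t" and U_t: "U lam t = eps\<^sup>2"
proof -
  have "3 * 3 < l * l" using l_gt_3 by (intro mult_strict_mono) auto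
  then have "9 * (3 * a + 2) < l\<^sup>2 * (3 * a + 2)"
    using a_pos by (intro mult_strict_right_mono) (auto simp: power2_eq_square)
  also have "\<dots> = lam\<^sup>2" using a_pos by (simp add: lam_eq power_mult_distrib)
  finally show "3 < t" "U lam t = eps\<^sup>2"
    using turning_point_root eps_gt_1 by (auto simp: a_def)
qed

lemma cubic_t: "a * t ^ 3 + 2 * t\<^sup>2 - lam\<^sup>2 * t + 2 * lam\<^sup>2 = 0"
  using U_eq_iff_cubic[of t lam eps] U_t t_gt_3 by (simp add: a_def)

lemma lam_sq_eq: "lam\<^sup>2 * (t - 2) = t\<^sup>2 * (a * t + 2)"
  using cubic_t by (simp add: algebra_simps power2_eq_square power3_eq_cube)

lemma a_t_sq_le: "a * t\<^sup>2 \<le> lam\<^sup>2"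
proof -
  have "t * (a * t\<^sup>2) = lam\<^sup>2 * t - 2 * lam\<^sup>2 - 2 * t\<^sup>2"
    using cubic_t by (simp add: power2_eq_square power3_eq_cube algebra_simps)
  also have "\<dots> \<le> t * lam\<^sup>2" by simp
  finally show ?thesis using t_gt_3 by simp
qed

lemma l_le_t: "l \<le> t"
proof -
  have "(3 * a + 2) * (t - 2) - (a * t + 2) = 2 * (a + 1) * (t - 3)" by (simp add: algebra_simps)
  moreover have "0 \<le> 2 * (a + 1) * (t - 3)" using a_pos t_gt_3 by simp
  ultimately have "a * t + 2 \<le> (3 * a + 2) * (t - 2)" by linarith
  then have "t\<^sup>2 * (a * t + 2) \<le> t\<^sup>2 * ((3 * a + 2) * (t - 2))" by (rule mult_left_mono) simp
  then have "lam\<^sup>2 * (t - 2) \<le> ((3 * a + 2) * t\<^sup>2) * (t - 2)"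
    by (simp only: lam_sq_eq ac_simps)
  then have "lam\<^sup>2 \<le> (3 * a + 2) * t\<^sup>2" by (rule mult_right_le_imp_le) (use t_gt_3 in simp)
  then have "lam\<^sup>2 / (3 * a + 2) \<le> t\<^sup>2" using a_pos by (simp add: pos_divide_le_eq mult.commute)
  then have "sqrt (lam\<^sup>2 / (3 * a + 2)) \<le> sqrt (t\<^sup>2)" by (rule real_sqrt_le_mono)
  moreover have "sqrt (lam\<^sup>2 / (3 * a + 2)) = l" unfolding l_def using lam_pos by (simp add: real_sqrt_divide)
  ultimately show ?thesis using t_gt_3 by simp
qed

lemma B_pos: "0 < B"
  unfolding B_def using a_pos l_gt_3 by (intro divide_pos_pos add_pos_pos mult_pos_pos) auto

lemma C_gt_a: "a < C"
  unfolding C_def using B_pos l_gt_3 by simp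

lemma lam_sq_le_B_t_sq: "lam\<^sup>2 \<le> B * t\<^sup>2"
proof -
  have "(a * l + 2) * (t - 2) - (a * t + 2) * (l - 2) = 2 * (a + 1) * (t - l)"
    by (simp add: algebra_simps)
  moreover have "0 \<le> 2 * (a + 1) * (t - l)" using a_pos l_le_t by simp
  ultimately have "(a * t + 2) * (l - 2) \<le> (a * l + 2) * (t - 2)" by linarith
  then have "(a * t + 2) / (t - 2) \<le> B" unfolding B_def using l_gt_3 t_gt_3 by (simp add: divide_simps)
  then have "t\<^sup>2 * ((a * t + 2) / (t - 2)) \<le> t\<^sup>2 * B" by (rule mult_left_mono) simp
  moreover have "lam\<^sup>2 = t\<^sup>2 * ((a * t + 2) / (t - 2))" using lam_sq_eq t_gt_3 by (simp add: field_simps)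
  ultimately show ?thesis by (simp add: mult.commute)
qed

lemma eps_sq_minus_U_le:
  assumes x: "t \<le> x"
  shows "eps\<^sup>2 - U lam x \<le> C - lam\<^sup>2 / x\<^sup>2"
proof -
  have x0: "0 < x" using x t_gt_3 by simp
  have "lam\<^sup>2 / x\<^sup>2 \<le> lam\<^sup>2 / t\<^sup>2" using x t_gt_3 by (simp add: frac_le power_mono)
  also have "\<dots> \<le> B" using lam_sq_le_B_t_sq t_gt_3 by (simp add: divide_simps)
  finally have lam_B: "lam\<^sup>2 / x\<^sup>2 \<le> B" .
  have inv: "2 / x \<le> 2 / l" using x l_le_t l_gt_3 by (simp add: frac_le)
  have "2 / x * (lam\<^sup>2 / x\<^sup>2) \<le> 2 / l * B"
    using inv lam_B by (rule mult_mono) (use l_gt_3 in auto)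
  moreover have "eps\<^sup>2 - U lam x = a - lam\<^sup>2 / x\<^sup>2 + 2 / x + 2 / x * (lam\<^sup>2 / x\<^sup>2)"
    unfolding U_def a_def using x0 by (simp add: field_simps power2_eq_square)
  ultimately show ?thesis using inv unfolding C_def by (simp add: algebra_simps add_divide_distrib)
qed

lemma eps_sq_minus_U_ge:
  assumes x: "t < x"
  shows "c0 * a * (x\<^sup>2 - t\<^sup>2) / x\<^sup>2 \<le> eps\<^sup>2 - U lam x"
proof -
  have x0: "0 < x" using x t_gt_3 by simp
  \<comment> \<open>\<open>t\<close> is a root of the cubic, so \<open>x - t\<close> divides it\<close>
  define Q where "Q = a * (x\<^sup>2 + x * t + t\<^sup>2) + 2 * (x + t) - lam\<^sup>2"
  have "a * x ^ 3 + 2 * x\<^sup>2 - lam\<^sup>2 * x + 2 * lam\<^sup>2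
          - (a * t ^ 3 + 2 * t\<^sup>2 - lam\<^sup>2 * t + 2 * lam\<^sup>2) = (x - t) * Q"
    unfolding Q_def power2_eq_square power3_eq_cube by algebra
  then have cubic_x: "a * x ^ 3 + 2 * x\<^sup>2 - lam\<^sup>2 * x + 2 * lam\<^sup>2 = (x - t) * Q"
    using cubic_t by simp
  have "lam\<^sup>2 = (a * t ^ 3 + 2 * t\<^sup>2 + 2 * lam\<^sup>2) / t"
    using cubic_t t_gt_3 by (simp add: field_simps)
  also have "\<dots> = a * t\<^sup>2 + 2 * t + 2 * lam\<^sup>2 / t"
    using t_gt_3 by (simp add: field_simps power2_eq_square power3_eq_cube)
  finally have Q_eq: "Q = a * (x\<^sup>2 + x * t) + 2 * x - 2 * lam\<^sup>2 / t"
    unfolding Q_def by (simp add: algebra_simps)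
  have c0_a: "c0 * a = a - B / l" unfolding c0_def using a_pos l_gt_3 by (simp add: field_simps)
  have "Q - c0 * a * x * (x + t) = B / l * x * (x + t) + 2 * x - 2 * lam\<^sup>2 / t"
    unfolding Q_eq c0_a by (simp add: algebra_simps power2_eq_square)
  moreover have "B / l * x * (2 * l) \<le> B / l * x * (x + t)"
    using B_pos l_gt_3 x0 x l_le_t by (intro mult_left_mono) auto
  moreover have "lam\<^sup>2 / t \<le> B * x"
  proof -
    have "lam\<^sup>2 / t \<le> B * t" using lam_sq_le_B_t_sq t_gt_3 by (simp add: divide_simps power2_eq_square)
    also have "\<dots> \<le> B * x" using B_pos x by simp
    finally show ?thesis .
  qed
  ultimately have Q_ge: "c0 * a * x * (x + t) \<le> Q" using x0 l_gt_3 by simp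
  have "c0 * a * (x\<^sup>2 - t\<^sup>2) / x\<^sup>2 = (x - t) * (c0 * a * x * (x + t)) / x ^ 3"
    using x0 by (simp add: field_simps power2_eq_square power3_eq_cube)
  also have "\<dots> \<le> (x - t) * Q / x ^ 3"
    using Q_ge x x0 by (intro divide_right_mono mult_left_mono) auto
  also have "\<dots> = eps\<^sup>2 - U lam x"
    using eps_sq_minus_U_eq[of x eps lam] x0 cubic_x by (simp add: a_def)
  finally show ?thesis .
qed

lemma eps_sq_minus_U_pos:
  assumes "t < x"
  shows "0 < eps\<^sup>2 - U lam x"
proof -
  have "t\<^sup>2 < x\<^sup>2" using assms t_gt_3 by (intro power_strict_mono) auto
  then have "0 < c0 * a * (x\<^sup>2 - t\<^sup>2) / x\<^sup>2"
    using c0_pos a_pos t_gt_3 by (intro divide_pos_pos mult_pos_pos) auto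
  then show ?thesis using eps_sq_minus_U_ge[OF assms] by linarith
qed

lemma lam_sq_le_C_mult_sq:
  assumes "t \<le> x"
  shows "lam\<^sup>2 \<le> C * x\<^sup>2"
proof -
  have "0 \<le> eps\<^sup>2 - U lam x"
    using assms U_t eps_sq_minus_U_pos[of x] by (cases "x = t") auto
  also have "\<dots> \<le> C - lam\<^sup>2 / x\<^sup>2" using eps_sq_minus_U_le[OF assms] .
  finally show ?thesis using assms t_gt_3 by (simp add: field_simps)
qed

lemma s_t: "s t = 0"
  unfolding s_fun_def using U_t by simp

lemma s_pos: "t < x \<Longrightarrow> 0 < s x"
  unfolding s_fun_def using eps_sq_minus_U_pos by simp

lemma s_ge:
  assumes "t < x"
  shows "sqrt (c0 * a) * sqrt (x\<^sup>2 - t\<^sup>2) / x \<le> s x"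
proof -
  have "sqrt (c0 * a) * sqrt (x\<^sup>2 - t\<^sup>2) / x = sqrt (c0 * a * (x\<^sup>2 - t\<^sup>2) / x\<^sup>2)"
    using assms t_gt_3 by (simp add: real_sqrt_mult real_sqrt_divide)
  also have "\<dots> \<le> s x" unfolding s_fun_def using eps_sq_minus_U_ge[OF assms] by simp
  finally show ?thesis .
qed

lemma s_le:
  assumes "t \<le> x"
  shows "s x \<le> sqrt (C * x\<^sup>2 - lam\<^sup>2) / x"
proof -
  have "s x \<le> sqrt (C - lam\<^sup>2 / x\<^sup>2)" unfolding s_fun_def using eps_sq_minus_U_le[OF assms] by simp
  also have "C - lam\<^sup>2 / x\<^sup>2 = (C * x\<^sup>2 - lam\<^sup>2) / x\<^sup>2" using assms t_gt_3 by (simp add: field_simps)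
  finally show ?thesis using assms t_gt_3 by (simp add: real_sqrt_divide)
qed

lemma G_integrand_t: "G_integrand sg eps lam t = 0"
  unfolding G_integrand_def using s_t by simp

lemma G_integrand_eq:
  assumes "t < x"
  shows "G_integrand sg eps lam x = 2 / (x - 2) + sg * eps * x / ((x - 2) * s x)"
proof -
  have nz: "x - 2 \<noteq> 0" "x \<noteq> 0" "s x \<noteq> 0" using assms t_gt_3 s_pos[OF assms] by auto
  then have "G_integrand sg eps lam x = (2 * s x + sg * eps * x) / ((x - 2) * s x)"
    unfolding G_integrand_def by (simp add: field_simps)
  also have "\<dots> = 2 / (x - 2) + sg * eps * x / ((x - 2) * s x)"
    using nz by (simp add: add_divide_distrib)
  finally show ?thesis .
qed

abbreviation K :: real where "K \<equiv> eps * l / ((l - 2) * sqrt (c0 * a))"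

lemma singular_part_le:
  assumes x: "t < x"
  shows "eps * x / ((x - 2) * s x) \<le> K * (x / sqrt (x\<^sup>2 - t\<^sup>2))"
proof -
  have x2: "2 < x" using x t_gt_3 by simp
  have tx: "t\<^sup>2 < x\<^sup>2" using x t_gt_3 by (intro power_strict_mono) auto
  then have m: "0 < sqrt (c0 * a) * sqrt (x\<^sup>2 - t\<^sup>2) / x" using c0_pos a_pos x2 by simp
  have "eps * x / ((x - 2) * s x) \<le> eps * x / ((x - 2) * (sqrt (c0 * a) * sqrt (x\<^sup>2 - t\<^sup>2) / x))"
    using s_ge[OF x] m x2 eps_gt_1 by (intro divide_left_mono mult_left_mono mult_pos_pos) auto
  also have "\<dots> = eps / sqrt (c0 * a) * (x / (x - 2)) * (x / sqrt (x\<^sup>2 - t\<^sup>2))"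
    using x2 m by (simp add: field_simps)
  also have "\<dots> \<le> eps / sqrt (c0 * a) * (l / (l - 2)) * (x / sqrt (x\<^sup>2 - t\<^sup>2))"
  proof -
    have "x / (x - 2) \<le> l / (l - 2)"
      using x l_le_t l_gt_3 by (simp add: divide_simps) (simp add: algebra_simps)
    moreover have "0 \<le> x / sqrt (x\<^sup>2 - t\<^sup>2)" using x2 tx by (intro divide_nonneg_nonneg) auto
    ultimately show ?thesis using eps_gt_1 c0_pos a_pos by (intro mult_right_mono mult_left_mono) auto
  qed
  also have "\<dots> = K * (x / sqrt (x\<^sup>2 - t\<^sup>2))" by (simp add: ac_simps)
  finally show ?thesis .
qed

lemma G_integrand_abs_le:
  assumes x: "t \<le> x" and sg: "\<bar>sg\<bar> = 1"
  shows "\<bar>G_integrand sg eps lam x\<bar> \<le> 2 / (l - 2) + K * (x / sqrt (x\<^sup>2 - t\<^sup>2))"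
proof (cases "x = t")
  case True
  then show ?thesis using G_integrand_t l_gt_3 eps_gt_1 c0_pos a_pos t_gt_3 by simp
next
  case False
  then have x: "t < x" using x by simp
  have x2: "2 < x" using x t_gt_3 by simp
  have "\<bar>G_integrand sg eps lam x\<bar> \<le> \<bar>2 / (x - 2)\<bar> + \<bar>sg * eps * x / ((x - 2) * s x)\<bar>"
    unfolding G_integrand_eq[OF x] by (rule abs_triangle_ineq)
  also have "\<bar>sg * eps * x / ((x - 2) * s x)\<bar> = eps * x / ((x - 2) * s x)"
    using sg eps_gt_1 x2 s_pos[OF x] by (simp add: abs_mult)
  also have "\<bar>2 / (x - 2)\<bar> \<le> 2 / (l - 2)" using x2 x l_le_t l_gt_3 by (simp add: frac_le)
  finally show ?thesis using singular_part_le[OF x] by simp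
qed

lemma majorant_has_integral:
  assumes "t \<le> X"
  shows "((\<lambda>x. 2 / (l - 2) + K * (x / sqrt (x\<^sup>2 - t\<^sup>2))) has_integral
           2 * (X - t) / (l - 2) + K * sqrt (X\<^sup>2 - t\<^sup>2)) {t..X}"
proof -
  have "((\<lambda>x. x / sqrt (x\<^sup>2 - t\<^sup>2)) has_integral sqrt (X\<^sup>2 - t\<^sup>2)) {t..X}"
    using has_integral_x_div_sqrt[of 1 "t\<^sup>2" t X] assms t_gt_3 by simp
  moreover have "((\<lambda>x. 2 / (l - 2)) has_integral 2 * (X - t) / (l - 2)) {t..X}"
    using has_integral_const_real[of "2 / (l - 2)" t X] assms by (simp add: algebra_simps)
  ultimately show ?thesis by (intro has_integral_add has_integral_mult_right)
qed

lemma G_integrand_integrable: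
  assumes "t \<le> X" and "\<bar>sg\<bar> = 1"
  shows "G_integrand sg eps lam integrable_on {t..X}"
proof (rule measurable_bounded_by_integrable_imp_integrable_real)
  show "(\<lambda>x. 2 / (l - 2) + K * (x / sqrt (x\<^sup>2 - t\<^sup>2))) integrable_on {t..X}"
    using majorant_has_integral[OF assms(1)] by blast
qed (use G_integrand_measurable G_integrand_abs_le assms(2) in auto)

lemma G_branch_plus_le:
  assumes "t \<le> X"
  shows "G_branch 1 eps lam X \<le> 2 * X / (l - 2) + K * sqrt (X\<^sup>2 - lam\<^sup>2 / B)"
proof -
  have "G_branch 1 eps lam X \<le> 2 * (X - t) / (l - 2) + K * sqrt (X\<^sup>2 - t\<^sup>2)"
    unfolding G_branch_eq_integral
  proof (rule has_integral_le[OF integrable_integral majorant_has_integral])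
    show "G_integrand 1 eps lam integrable_on {t..X}" using G_integrand_integrable[OF assms] by simp
    show "G_integrand 1 eps lam x \<le> 2 / (l - 2) + K * (x / sqrt (x\<^sup>2 - t\<^sup>2))"
      if "x \<in> {t..X}" for x
      using G_integrand_abs_le[of x 1] that by (simp add: abs_le_iff)
  qed (rule assms)
  also have "\<dots> \<le> 2 * X / (l - 2) + K * sqrt (X\<^sup>2 - lam\<^sup>2 / B)"
  proof -
    have "lam\<^sup>2 / B \<le> t\<^sup>2" using lam_sq_le_B_t_sq B_pos by (simp add: divide_simps mult.commute)
    moreover have "0 \<le> K" using eps_gt_1 l_gt_3 c0_pos a_pos by simp
    ultimately have "K * sqrt (X\<^sup>2 - t\<^sup>2) \<le> K * sqrt (X\<^sup>2 - lam\<^sup>2 / B)"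
      by (intro mult_left_mono) auto
    moreover have "2 * (X - t) / (l - 2) \<le> 2 * X / (l - 2)"
      using t_gt_3 l_gt_3 by (intro divide_right_mono) auto
    ultimately show ?thesis by linarith
  qed
  finally show ?thesis .
qed

lemma G_branch_minus_le:
  assumes "t \<le> X"
  shows "G_branch (-1) eps lam X \<le> 2 * X / (l - 2)"
proof -
  have "G_branch (-1) eps lam X \<le> integral {t..X} (\<lambda>x. 2 / (l - 2))"
    unfolding G_branch_eq_integral
  proof (rule integral_le)
    show "G_integrand (-1) eps lam integrable_on {t..X}" using G_integrand_integrable[OF assms] by simp
    show "G_integrand (-1) eps lam x \<le> 2 / (l - 2)" if "x \<in> {t..X}" for x
    proof (cases "x = t")
      case True
      then show ?thesis using G_integrand_t l_gt_3 by simp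
    next
      case False
      then have x: "t < x" using that by simp
      have "G_integrand (-1) eps lam x \<le> 2 / (x - 2)"
        using G_integrand_eq[OF x] eps_gt_1 x t_gt_3 s_pos[OF x] by simp
      also have "\<dots> \<le> 2 / (l - 2)" using x l_le_t l_gt_3 by (simp add: frac_le)
      finally show ?thesis .
    qed
  qed (rule integrable_const_ivl)
  also have "\<dots> = (X - t) * (2 / (l - 2))" using assms by simp
  also have "\<dots> \<le> X * (2 / (l - 2))" using t_gt_3 l_gt_3 by (intro mult_right_mono) auto
  also have "\<dots> = 2 * X / (l - 2)" by simp
  finally show ?thesis .
qed

lemma G_branch_plus_ge:
  assumes X: "t \<le> X"
  shows "eps / C * (sqrt (C * X\<^sup>2 - lam\<^sup>2) - lam * sqrt ((C - a) / a)) \<le> G_branch 1 eps lam X"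
proof -
  have C: "0 < C" using C_gt_a a_pos by simp
  \<comment> \<open>the minorant may be positive at \<open>t\<close>, where the integrand vanishes\<close>
  define h where "h x = (if x = t then 0 else eps * (x / sqrt (C * x\<^sup>2 - lam\<^sup>2)))" for x
  have "((\<lambda>x. eps * (x / sqrt (C * x\<^sup>2 - lam\<^sup>2))) has_integral
          eps * ((sqrt (C * X\<^sup>2 - lam\<^sup>2) - sqrt (C * t\<^sup>2 - lam\<^sup>2)) / C)) {t..X}"
    using C lam_sq_le_C_mult_sq[of t] t_gt_3 X by (intro has_integral_mult_right has_integral_x_div_sqrt) auto
  then have h: "(h has_integral eps * ((sqrt (C * X\<^sup>2 - lam\<^sup>2) - sqrt (C * t\<^sup>2 - lam\<^sup>2)) / C)) {t..X}"
    by (rule has_integral_spike[OF negligible_sing[of t], rotated]) (simp_all add: h_def)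
  have "sqrt (C * t\<^sup>2 - lam\<^sup>2) \<le> sqrt (lam\<^sup>2 * ((C - a) / a))"
    using a_t_sq_le C a_pos by (intro real_sqrt_le_mono) (simp add: field_simps)
  also have "\<dots> = lam * sqrt ((C - a) / a)"
    using lam_pos by (simp only: real_sqrt_mult real_sqrt_abs abs_of_pos)
  finally have "eps / C * (sqrt (C * X\<^sup>2 - lam\<^sup>2) - lam * sqrt ((C - a) / a))
      \<le> eps / C * (sqrt (C * X\<^sup>2 - lam\<^sup>2) - sqrt (C * t\<^sup>2 - lam\<^sup>2))"
    using eps_gt_1 C by (intro mult_left_mono) auto
  also have "\<dots> = eps * ((sqrt (C * X\<^sup>2 - lam\<^sup>2) - sqrt (C * t\<^sup>2 - lam\<^sup>2)) / C)" by simp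
  also have "\<dots> \<le> G_branch 1 eps lam X"
    unfolding G_branch_eq_integral
  proof (rule has_integral_le[OF h integrable_integral[OF G_integrand_integrable[OF X]]])
    fix x assume x: "x \<in> {t..X}"
    show "h x \<le> G_integrand 1 eps lam x"
    proof (cases "x = t")
      case True
      then show ?thesis by (simp add: h_def G_integrand_t)
    next
      case False
      then have x: "t < x" using x by simp
      have x2: "2 < x" using x t_gt_3 by simp
      have "0 < C - lam\<^sup>2 / x\<^sup>2" using eps_sq_minus_U_pos[OF x] eps_sq_minus_U_le[of x] x by simp
      then have pos: "0 < C * x\<^sup>2 - lam\<^sup>2" using x2 by (simp add: field_simps)
      have "h x = eps / (sqrt (C * x\<^sup>2 - lam\<^sup>2) / x)" using False by (simp add: h_def)
      also have "\<dots> \<le> eps / s x"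
        using s_le[of x] x s_pos[OF x] eps_gt_1 pos x2 by (intro divide_left_mono) auto
      also have "\<dots> \<le> eps * x / ((x - 2) * s x)"
        using x2 s_pos[OF x] eps_gt_1 by (simp add: divide_simps)
      also have "\<dots> \<le> G_integrand 1 eps lam x" unfolding G_integrand_eq[OF x] using x2 by simp
      finally show ?thesis .
    qed
  qed simp
  finally show ?thesis .
qed

lemma turning_point_le:
  assumes "lam\<^sup>2 < a * X\<^sup>2" and "0 < X"
  shows "t \<le> X"
proof -
  have "a * t\<^sup>2 < a * X\<^sup>2" using a_t_sq_le assms(1) by simp
  then have "t\<^sup>2 < X\<^sup>2" using a_pos by simp
  then show ?thesis using assms(2) t_gt_3 by (smt (verit) power_mono)
qed

end

lemma lam_asymptotics:
  fixes eps v a p k :: real and lam l B C c0 :: "real \<Rightarrow> real"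
  assumes "0 < eps" "0 < v" "0 < a" "1 < p" "0 < k" "v\<^sup>2 = a + 1 - p"
    and lam_def: "\<And>X. lam X = X * sqrt (p / (1 - 2 / X) - 1)"
    and l_def: "\<And>X. l X = lam X / k"
    and B_def: "\<And>X. B X = (a * l X + 2) / (l X - 2)"
    and C_def: "\<And>X. C X = a + 2 / l X * (1 + B X)"
    and c0_def: "\<And>X. c0 X = 1 - B X / (a * l X)"
  shows "\<forall>\<^sub>F X in at_top. 3 < l X \<and> 0 < c0 X \<and> (lam X)\<^sup>2 < a * X\<^sup>2"
    and "((\<lambda>X. 2 / (l X - 2)) \<longlongrightarrow> 0) at_top"
    and "((\<lambda>X. eps / C X * (sqrt (C X * X\<^sup>2 - (lam X)\<^sup>2) - lam X * sqrt ((C X - a) / a)) / X)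
           \<longlongrightarrow> eps * v / a) at_top"
    and "((\<lambda>X. (2 * X / (l X - 2) + eps * l X / ((l X - 2) * sqrt (c0 X * a))
                   * sqrt (X\<^sup>2 - (lam X)\<^sup>2 / B X)) / X)
           \<longlongrightarrow> eps * v / a) at_top"
proof -
  \<comment> \<open>\<open>real_asymp\<close> needs these normal forms of the leading coefficients to decide signs and limits\<close>
  have v: "v = sqrt (a + 1 - p)" using assms by (metis real_sqrt_unique less_imp_le)
  have ap: "a + 1 - p > 0" using assms by (metis zero_less_power)
  have sp: "sqrt (p - 1) > 0" "inverse (sqrt (p - 1)) > 0" using assms by auto
  have cancel: "sqrt (p - 1) * inverse k * (inverse (sqrt (p - 1)) * k) = 1"
    using assms sp by (simp add: field_simps)
  have cancel2: "a * (sqrt (p - 1) * inverse k) * (inverse (sqrt (p - 1)) * k) = a"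
    using assms sp by (simp add: field_simps)
  have a1: "0 < 1 + a" using assms by simp
  have eq3: "a - (p - 1) = a + 1 - p" by simp
  have e: "((p - 1) powr (1 / 2))\<^sup>2 = p - 1" using assms ap by (simp add: powr_half_sqrt)
  have e': "p - 1 - a < 0" "p - 1 < a" using ap by auto
  have "\<forall>\<^sub>F X in at_top. 3 < l X" unfolding l_def lam_def using assms by real_asymp
  moreover have "\<forall>\<^sub>F X in at_top. 0 < c0 X"
    unfolding c0_def B_def l_def lam_def using assms by real_asymp
  moreover have "\<forall>\<^sub>F X in at_top. (lam X)\<^sup>2 < a * X\<^sup>2"
    unfolding lam_def using assms ap by (real_asymp simp add: e e')
  ultimately show "\<forall>\<^sub>F X in at_top. 3 < l X \<and> 0 < c0 X \<and> (lam X)\<^sup>2 < a * X\<^sup>2"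
    by eventually_elim auto
  show "((\<lambda>X. 2 / (l X - 2)) \<longlongrightarrow> 0) at_top"
    unfolding l_def lam_def using assms by real_asymp
  have "((\<lambda>X. eps / C X * (sqrt (C X * X\<^sup>2 - (lam X)\<^sup>2) - lam X * sqrt ((C X - a) / a)) / X)
           \<longlongrightarrow> eps * inverse a * sqrt (a + 1 - p)) at_top"
    unfolding C_def B_def l_def lam_def using assms ap sp
    by (real_asymp simp add: powr_half_sqrt cancel cancel2 a1 e eq3)
  moreover have "eps * inverse a * sqrt (a + 1 - p) = eps * v / a" unfolding v by (simp add: divide_inverse)
  ultimately show "((\<lambda>X. eps / C X * (sqrt (C X * X\<^sup>2 - (lam X)\<^sup>2) - lam X * sqrt ((C X - a) / a)) / X)
           \<longlongrightarrow> eps * v / a) at_top"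
    by simp
  have e1: "1 - (p - 1) * (inverse a * (inverse (sqrt (p - 1)) * k) * (sqrt (p - 1) * inverse k))
      = (a + 1 - p) / a"
    using assms by (simp add: field_simps)
  have e2: "1 - ((p - 1) powr (1 / 2))\<^sup>2 * (inverse a * (inverse ((p - 1) powr (1 / 2)) * k)
      * ((p - 1) powr (1 / 2) * inverse k)) = (a + 1 - p) / a"
    using e1 assms by (simp add: powr_half_sqrt)
  have e3: "eps * ((p - 1) powr (1 / 2) * inverse k) * (inverse ((p - 1) powr (1 / 2)) * k
      * inverse (a powr (1 / 2))) = eps * inverse (a powr (1 / 2))"
    using assms by (simp add: field_simps)
  have "((\<lambda>X. (2 * X / (l X - 2) + eps * l X / ((l X - 2) * sqrt (c0 X * a))
                   * sqrt (X\<^sup>2 - (lam X)\<^sup>2 / B X)) / X)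
           \<longlongrightarrow> eps * inverse (a powr (1 / 2)) * ((a + 1 - p) / a) powr (1 / 2)) at_top"
    unfolding c0_def B_def l_def lam_def using assms ap by (real_asymp simp add: e1 e2 e3)
  moreover have "eps * inverse (a powr (1 / 2)) * ((a + 1 - p) / a) powr (1 / 2) = eps * v / a"
    using assms ap unfolding v by (simp add: powr_half_sqrt real_sqrt_divide field_simps)
  ultimately show "((\<lambda>X. (2 * X / (l X - 2) + eps * l X / ((l X - 2) * sqrt (c0 X * a))
                   * sqrt (X\<^sup>2 - (lam X)\<^sup>2 / B X)) / X)
           \<longlongrightarrow> eps * v / a) at_top"
    by simp
qed

lemma G_branch_lam_v_ratios:
  fixes eps v :: real
  assumes eps: "1 < eps" and v: "0 < v" "v\<^sup>2 < eps\<^sup>2 - 1"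
  shows "((\<lambda>X. G_branch 1 eps (lam_v eps v X) X / X) \<longlongrightarrow> eps * v / (eps\<^sup>2 - 1)) at_top"
    and "\<exists>M. (M \<longlongrightarrow> 0) at_top \<and>
           (\<forall>\<^sub>F X in at_top. G_branch (-1) eps (lam_v eps v X) X / X \<le> M X)"
proof -
  define a where "a = eps\<^sup>2 - 1"
  define p where "p = eps\<^sup>2 - v\<^sup>2"
  define k where "k = sqrt (3 * a + 2)"
  define lam where "lam X = X * sqrt (p / (1 - 2 / X) - 1)" for X :: real
  define l where "l X = lam X / k" for X
  define B where "B X = (a * l X + 2) / (l X - 2)" for X
  define C where "C X = a + 2 / l X * (1 + B X)" for X
  define c0 where "c0 X = 1 - B X / (a * l X)" for X
  define lower where
    "lower X = eps / C X * (sqrt (C X * X\<^sup>2 - (lam X)\<^sup>2) - lam X * sqrt ((C X - a) / a)) / X" for X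
  define upper where
    "upper X = (2 * X / (l X - 2) + eps * l X / ((l X - 2) * sqrt (c0 X * a))
                 * sqrt (X\<^sup>2 - (lam X)\<^sup>2 / B X)) / X" for X
  have a: "0 < a" using eps by (simp add: a_def one_less_power)
  have eps_pos: "0 < eps" using eps by simp
  have k: "0 < k" using a by (simp add: k_def)
  have p: "1 < p" "v\<^sup>2 = a + 1 - p" using v by (auto simp: a_def p_def)
  note asym = lam_asymptotics[OF eps_pos v(1) a p(1) k p(2) lam_def l_def B_def C_def c0_def,
      folded lower_def upper_def]
  have lam_v: "lam_v eps v X = lam X" for X by (simp add: lam_v_def lam_def p_def)
  have "\<forall>\<^sub>F X in at_top. lower X \<le> G_branch 1 eps (lam X) X / X \<and>
      G_branch 1 eps (lam X) X / X \<le> upper X \<and>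
      G_branch (-1) eps (lam X) X / X \<le> 2 / (l X - 2)"
    using asym(1) eventually_gt_at_top[of 0]
  proof eventually_elim
    case (elim X)
    interpret turning_point_estimates eps "lam X" a "l X" "B X" "C X" "c0 X"
      using eps elim by unfold_locales (simp_all add: a_def l_def k_def B_def C_def c0_def)
    have "turning_point eps (lam X) \<le> X" using elim by (intro turning_point_le) auto
    then have "G_branch 1 eps (lam X) X \<le> upper X * X"
      and "lower X * X \<le> G_branch 1 eps (lam X) X"
      and "G_branch (-1) eps (lam X) X \<le> 2 / (l X - 2) * X"
      using G_branch_plus_le G_branch_plus_ge G_branch_minus_le elim(2)
      by (simp_all add: lower_def upper_def)
    then show ?case using elim(2) by (simp add: pos_divide_le_eq pos_le_divide_eq)
  qed
  then have "\<forall>\<^sub>F X in at_top. lower X \<le> G_branch 1 eps (lam X) X / X"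
    and "\<forall>\<^sub>F X in at_top. G_branch 1 eps (lam X) X / X \<le> upper X"
    and minus: "\<forall>\<^sub>F X in at_top. G_branch (-1) eps (lam X) X / X \<le> 2 / (l X - 2)"
    unfolding eventually_conj_iff by blast+
  then have "((\<lambda>X. G_branch 1 eps (lam X) X / X) \<longlongrightarrow> eps * v / a) at_top"
    by (intro tendsto_sandwich[OF _ _ asym(3) asym(4)])
  then show "((\<lambda>X. G_branch 1 eps (lam_v eps v X) X / X) \<longlongrightarrow> eps * v / (eps\<^sup>2 - 1)) at_top"
    by (simp add: lam_v a_def)
  show "\<exists>M. (M \<longlongrightarrow> 0) at_top \<and>
           (\<forall>\<^sub>F X in at_top. G_branch (-1) eps (lam_v eps v X) X / X \<le> M X)"
    using asym(2) minus unfolding lam_v by blast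
qed

lemma tendsto_ratio_of_derivative:
  fixes f f' :: "real \<Rightarrow> real"
  assumes "\<forall>\<^sub>F x in at_top. (f has_real_derivative f' x) (at x)" and "(f' \<longlongrightarrow> r) at_top"
  shows "((\<lambda>x. f x / x) \<longlongrightarrow> r) at_top"
proof (rule lhospital_at_top_at_top[of "\<lambda>x. x" "\<lambda>_. 1"])
  show "filterlim (\<lambda>x::real. x) at_top at_top" by (rule filterlim_ident)
  show "\<forall>\<^sub>F x in at_top. ((\<lambda>x. x) has_real_derivative 1) (at x)" by (simp add: DERIV_ident)
  show "((\<lambda>x. f' x / 1) \<longlongrightarrow> r) at_top" using assms(2) by simp
qed (use assms(1) in auto)

lemma filterlim_at_top_of_ratio:
  fixes f :: "real \<Rightarrow> real"
  assumes "((\<lambda>x. f x / x) \<longlongrightarrow> r) at_top" and "0 < r"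
  shows "filterlim f at_top at_top"
proof -
  have "filterlim (\<lambda>x. f x / x * x) at_top at_top"
    by (rule filterlim_tendsto_pos_mult_at_top[OF assms filterlim_ident])
  moreover have "\<forall>\<^sub>F x in at_top. f x / x * x = f x"
    using eventually_gt_at_top[of 0] by eventually_elim simp
  ultimately show ?thesis by (simp add: filterlim_cong)
qed

lemma filterlim_comp_diff_at_bot:
  fixes G M xi :: "real \<Rightarrow> real"
  assumes xi: "filterlim xi at_top at_top" and xi_ratio: "((\<lambda>\<tau>. xi \<tau> / \<tau>) \<longlongrightarrow> r) at_top"
    and bound: "\<forall>\<^sub>F X in at_top. G X / X \<le> M X" and M: "(M \<longlongrightarrow> m) at_top"
    and less: "m * r < 1"
  shows "filterlim (\<lambda>\<tau>. G (xi \<tau>) - \<tau>) at_bot at_top"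
proof (rule filterlim_at_bot_mono)
  have "((\<lambda>\<tau>. M (xi \<tau>) * (xi \<tau> / \<tau>) - 1) \<longlongrightarrow> m * r - 1) at_top"
    by (intro tendsto_intros filterlim_compose[OF M xi] xi_ratio)
  then show "filterlim (\<lambda>\<tau>. (M (xi \<tau>) * (xi \<tau> / \<tau>) - 1) * \<tau>) at_bot at_top"
    by (rule filterlim_tendsto_neg_mult_at_bot[OF _ _ filterlim_ident]) (use less in simp)
  show "\<forall>\<^sub>F \<tau> in at_top. G (xi \<tau>) - \<tau> \<le> (M (xi \<tau>) * (xi \<tau> / \<tau>) - 1) * \<tau>"
    using eventually_compose_filterlim[OF eventually_conj[OF bound eventually_gt_at_top[of 0]] xi]
      eventually_gt_at_top[of 0]
  proof eventually_elim
    case (elim \<tau>)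
    then have "G (xi \<tau>) / xi \<tau> * xi \<tau> \<le> M (xi \<tau>) * xi \<tau>" by (intro mult_right_mono) auto
    then have "G (xi \<tau>) \<le> M (xi \<tau>) * xi \<tau>" using elim by simp
    then show ?case using elim by (simp add: algebra_simps)
  qed
qed

lemma filterlim_comp_diff_at_top:
  fixes G M xi :: "real \<Rightarrow> real"
  assumes xi: "filterlim xi at_top at_top" and xi_ratio: "((\<lambda>\<tau>. xi \<tau> / \<tau>) \<longlongrightarrow> r) at_top"
    and bound: "\<forall>\<^sub>F X in at_top. M X \<le> G X / X" and M: "(M \<longlongrightarrow> m) at_top"
    and greater: "1 < m * r"
  shows "filterlim (\<lambda>\<tau>. G (xi \<tau>) - \<tau>) at_top at_top"
proof (rule filterlim_at_top_mono)
  have "((\<lambda>\<tau>. M (xi \<tau>) * (xi \<tau> / \<tau>) - 1) \<longlongrightarrow> m * r - 1) at_top"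
    by (intro tendsto_intros filterlim_compose[OF M xi] xi_ratio)
  then show "filterlim (\<lambda>\<tau>. (M (xi \<tau>) * (xi \<tau> / \<tau>) - 1) * \<tau>) at_top at_top"
    by (rule filterlim_tendsto_pos_mult_at_top[OF _ _ filterlim_ident]) (use greater in simp)
  show "\<forall>\<^sub>F \<tau> in at_top. (M (xi \<tau>) * (xi \<tau> / \<tau>) - 1) * \<tau> \<le> G (xi \<tau>) - \<tau>"
    using eventually_compose_filterlim[OF eventually_conj[OF bound eventually_gt_at_top[of 0]] xi]
      eventually_gt_at_top[of 0]
  proof eventually_elim
    case (elim \<tau>)
    then have "M (xi \<tau>) * xi \<tau> \<le> G (xi \<tau>) / xi \<tau> * xi \<tau>" by (intro mult_right_mono) auto
    then have "M (xi \<tau>) * xi \<tau> \<le> G (xi \<tau>)" using elim by simp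
    then show ?case using elim by (simp add: algebra_simps)
  qed
qed

theorem lemma5:
  fixes xi xi' :: "real \<Rightarrow> real" and vinf eps v :: real
  assumes deriv: "\<forall>\<^sub>F \<tau> in at_top. (xi has_real_derivative xi' \<tau>) (at \<tau>)"
    and vlim: "(xi' \<longlongrightarrow> vinf) at_top"
    and vinf: "0 < vinf" "vinf < 1"
    and eps: "eps > 1"
    and v: "0 < v" "v < sqrt (eps\<^sup>2 - 1)"
  shows "filterlim (\<lambda>\<tau>. G_branch (-1) eps (lam_v eps v (xi \<tau>)) (xi \<tau>) - \<tau>) at_bot at_top
         \<and> (v < a_crit eps vinf \<longrightarrow>
              filterlim (\<lambda>\<tau>. G_branch 1 eps (lam_v eps v (xi \<tau>)) (xi \<tau>) - \<tau>) at_bot at_top)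
         \<and> (v > a_crit eps vinf \<longrightarrow>
              filterlim (\<lambda>\<tau>. G_branch 1 eps (lam_v eps v (xi \<tau>)) (xi \<tau>) - \<tau>) at_top at_top)"
proof -
  have xi_ratio: "((\<lambda>\<tau>. xi \<tau> / \<tau>) \<longlongrightarrow> vinf) at_top"
    using deriv vlim by (rule tendsto_ratio_of_derivative)
  have xi: "filterlim xi at_top at_top" using xi_ratio vinf(1) by (rule filterlim_at_top_of_ratio)
  have a: "0 < eps\<^sup>2 - 1" using eps by (simp add: one_less_power)
  have "v\<^sup>2 < eps\<^sup>2 - 1"
    using v a by (metis real_sqrt_pow2 less_imp_le power_strict_mono zero_less_numeral)
  note ratios = G_branch_lam_v_ratios[OF eps v(1) this]
  obtain M where M: "(M \<longlongrightarrow> 0) at_top"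
    "\<forall>\<^sub>F X in at_top. G_branch (-1) eps (lam_v eps v X) X / X \<le> M X"
    using ratios(2) by blast
  have crit: "v < a_crit eps vinf \<longleftrightarrow> eps * v / (eps\<^sup>2 - 1) * vinf < 1"
    "a_crit eps vinf < v \<longleftrightarrow> 1 < eps * v / (eps\<^sup>2 - 1) * vinf"
    using a eps vinf by (auto simp: a_crit_def field_simps)
  have refl: "\<forall>\<^sub>F X in at_top.
      G_branch 1 eps (lam_v eps v X) X / X \<le> G_branch 1 eps (lam_v eps v X) X / X" by simp
  show ?thesis
    using filterlim_comp_diff_at_bot[OF xi xi_ratio M(2) M(1)] crit
      filterlim_comp_diff_at_bot[OF xi xi_ratio refl ratios(1)]
      filterlim_comp_diff_at_top[OF xi xi_ratio refl ratios(1)]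
    by auto
qed

end
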